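(* Let $\mathcal{S}\subseteq\overline{\mathbb{M}}$. Then $\Delta^{(m-1)}_e(\phi(\mathcal{S}))\subseteq\Delta^{(m-1)}_e(\mathcal{S})$ for all integers $e\ge0$.
   Context: $q$ is a prime power, $m$ a positive integer. A monomial $\mu\neq1$ in $x_0,\dots,x_m$ written $x_0^{a_0}\cdots x_k^{a_k}$ with $a_k>0$ is projectively reduced if $a_0,\dots,a_{k-1}\le q-1$; $1$ is projectively reduced. $\overline{\mathbb{M}}$ is the set of projectively reduced monomials, $\overline{\mathbb{M}}_e$ those of degree $e$. $\overline{\mathbb{M}}^{(0)}=\{x_0^a:a\ge0\}$, and for $1\le\ell\le m$, $\overline{\mathbb{M}}^{(\ell)}=\{x_0^{a_0}\cdots x_\ell^{a_\ell}\in\overline{\mathbb{M}}:a_\ell>0\}$; $\overline{\mathbb{M}}^{(\ell)}_e=\overline{\mathbb{M}}^{(\ell)}\cap\overline{\mathbb{M}}_e$. For a set $\mathcal{S}$ of monomials, $\Delta_e(\mathcal{S})=\{\mu\in\overline{\mathbb{M}}_e:\text{no }\nu\in\mathcal{S}\text{ divides }\mu\}$ and $\Delta^{(\ell)}_e(\mathcal{S})=\Delta_e(\mathcal{S})\cap\overline{\mathbb{M}}^{(\ell)}_e$. Given $\mathcal{S}\subseteq\overline{\mathbb{M}}$, for $\mu=x_0^{i_0}\cdots x_m^{i_m}\in\mathcal{S}$ set $\phi(\mu)=\mu x_{m-1}/x_m$ if $x_0^{i_0}\cdots x_{m-2}^{i_{m-2}}x_{m-1}^{i_{m-1}+i_m}\notin\mathcal{S}$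 and $i_{m-1}+1<q$, and $\phi(\mu)=\mu$ otherwise; $\phi(\mathcal{S})$ is the image. *)

theory Defs
  imports "HOL-Computational_Algebra.Primes"
begin

text \<open>Monomials in x_0,...,x_m are represented by exponent vectors
  a :: nat => nat with a i = 0 for i > m; the monomial 1 is the zero vector.\<close>

type_synonym monom = "nat \<Rightarrow> nat"

definition is_monom :: "nat \<Rightarrow> monom \<Rightarrow> bool" where
  "is_monom m a \<longleftrightarrow> (\<forall>i>m. a i = 0)"

definition mdeg :: "nat \<Rightarrow> monom \<Rightarrow> nat" where
  "mdeg m a = (\<Sum>i\<le>m. a i)"

definition mdvd :: "monom \<Rightarrow> monom \<Rightarrow> bool" where
  "mdvd b a \<longleftrightarrow> (\<forall>i. b i \<le> a i)"

definition proj_reduced :: "nat \<Rightarrow> nat \<Rightarrow> monom \<Rightarrow> bool" where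
  "proj_reduced q m a \<longleftrightarrow> is_monom m a \<and>
     (a = (\<lambda>_. 0) \<or> (\<exists>k\<le>m. a k > 0 \<and> (\<forall>i>k. a i = 0) \<and> (\<forall>i<k. a i \<le> q - 1)))"

definition Mbar :: "nat \<Rightarrow> nat \<Rightarrow> monom set" where
  "Mbar q m = {a. proj_reduced q m a}"

definition Mbar_e :: "nat \<Rightarrow> nat \<Rightarrow> nat \<Rightarrow> monom set" where
  "Mbar_e q m e = {a \<in> Mbar q m. mdeg m a = e}"

definition Mbar_l :: "nat \<Rightarrow> nat \<Rightarrow> nat \<Rightarrow> monom set" where
  "Mbar_l q m l =
     (if l = 0 then {a. is_monom m a \<and> (\<forall>i>0. a i = 0)}
      else {a \<in> Mbar q m. (\<forall>i>l. a i = 0) \<and> a l > 0})"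

definition Delta_e :: "nat \<Rightarrow> nat \<Rightarrow> nat \<Rightarrow> monom set \<Rightarrow> monom set" where
  "Delta_e q m e S = {mu \<in> Mbar_e q m e. \<not> (\<exists>nu\<in>S. mdvd nu mu)}"

definition Delta_le :: "nat \<Rightarrow> nat \<Rightarrow> nat \<Rightarrow> nat \<Rightarrow> monom set \<Rightarrow> monom set" where
  "Delta_le q m l e S = Delta_e q m e S \<inter> (Mbar_l q m l \<inter> Mbar_e q m e)"

definition phi :: "nat \<Rightarrow> nat \<Rightarrow> monom set \<Rightarrow> monom \<Rightarrow> monom" where
  "phi q m S mu =
     (if (mu(m - 1 := mu (m - 1) + mu m, m := 0)) \<notin> S \<and> mu (m - 1) + 1 < q
      then mu(m - 1 := mu (m - 1) + 1, m := mu m - 1)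
      else mu)"

definition phi_set :: "nat \<Rightarrow> nat \<Rightarrow> monom set \<Rightarrow> monom set" where
  "phi_set q m S = phi q m S ` S"

end

theory Submission
  imports Defs
begin

text \<open>A monomial of level \<open>m - 1\<close> does not involve \<open>x\<^sub>m\<close>, so neither does any of its
  divisors \<open>\<nu> \<in> S\<close>; such a \<open>\<nu>\<close> is fixed by \<open>\<phi>\<close> (merging its trivial \<open>x\<^sub>m\<close>-part into
  \<open>x\<^sub>m\<^sub>-\<^sub>1\<close> gives back \<open>\<nu> \<in> S\<close>) and hence lies in \<open>\<phi>(S)\<close>.\<close>

lemma Mbar_l_pred_last_zero:
  assumes "m \<ge> 1" and "a \<in> Mbar_l q m (m - 1)"
  shows "a m = 0"
  using assms by (cases "m - 1 = 0") (auto simp: Mbar_l_def)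

lemma mdvd_zero_right:
  assumes "mdvd b a" and "a i = 0"
  shows "b i = 0"
  using assms by (metis mdvd_def le_zero_eq)

lemma phi_last_zero:
  assumes "nu \<in> S" and "nu m = 0"
  shows "phi q m S nu = nu"
proof -
  have "nu(m - 1 := nu (m - 1) + nu m, m := 0) = nu"
    using assms(2) by auto
  then show ?thesis
    using assms(1) by (simp add: phi_def)
qed

lemma phi_set_last_zero:
  assumes "nu \<in> S" and "nu m = 0"
  shows "nu \<in> phi_set q m S"
  using assms phi_last_zero[OF assms] unfolding phi_set_def by (metis image_eqI)

lemma Delta_e_if_divisors_in:
  assumes "mu \<in> Delta_e q m e T"
    and "\<And>nu. nu \<in> S \<Longrightarrow> mdvd nu mu \<Longrightarrow> nu \<in> T"
  shows "mu \<in> Delta_e q m e S"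
  using assms unfolding Delta_e_def by blast

theorem lemma4p7:
  fixes q m :: nat and S :: "monom set"
  assumes "\<exists>p k. prime p \<and> k > 0 \<and> q = p ^ k"
    and "m \<ge> 1"
    and "S \<subseteq> Mbar q m"
  shows "\<forall>e::nat. Delta_le q m (m - 1) e (phi_set q m S) \<subseteq> Delta_le q m (m - 1) e S"
proof (intro allI subsetI)
  fix e mu
  assume mu: "mu \<in> Delta_le q m (m - 1) e (phi_set q m S)"
  then have "mu m = 0"
    using Mbar_l_pred_last_zero[OF assms(2)] unfolding Delta_le_def by blast
  then have "nu \<in> phi_set q m S" if "nu \<in> S" and "mdvd nu mu" for nu
    using that by (blast intro: phi_set_last_zero mdvd_zero_right)
  moreover have "mu \<in> Delta_e q m e (phi_set q m S)"
    using mu by (simp add: Delta_le_def)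
  ultimately have "mu \<in> Delta_e q m e S"
    by (blast intro: Delta_e_if_divisors_in)
  then show "mu \<in> Delta_le q m (m - 1) e S"
    using mu by (simp add: Delta_le_def)
qed

end
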